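(* Let $\Omega\subsetneq\mathbb{C}$ be a domain which is not simply connected, and suppose $\mathscr{C}_{\Omega}^{\mathbb{D}}(z)>0$ for all $z\in\Omega$. Then for every $w\in\Omega$, $$\mathscr{C}_{\Omega}^{\mathbb{D}}(w)<\eta_\Omega(w).$$
   Context: $\mathbb{D}=\{z\in\mathbb{C}:|z|<1\}$. For domains $\Omega\subset\mathbb{C}$, $Y\subsetneq\mathbb{C}$, and points $w\in\Omega$, $s\in Y$, let $\mathcal{H}^s_w(\Omega,Y)$ be the set of holomorphic maps $h:\Omega\to Y$ with $h(w)=s$ and $h(z)\neq s$ for all $z\in\Omega\setminus\{w\}$. For a domain $Y\subsetneq\mathbb{C}$ and $v\in Y$, the Hurwitz density is $\eta_Y(v)=2/r_Y(v)$, where $r_Y(v)=\max\{h'(0): h:\mathbb{D}\to Y \text{ holomorphic},\ h(0)=v,\ h(z)\neq v \text{ for } z\in\mathbb{D}\setminus\{0\},\ h'(0)>0\}$. The Carathéodory density of the Hurwitz metric is $\mathscr{C}_{\Omega}^{Y,s}(w)=\sup\{\eta_Y(h(w))|h'(w)| : h\in\mathcal{H}^s_w(\Omega,Y)\}$ (defined to be $0$ if the family is empty), and $\mathscr{C}_{\Omega}^{\mathbb{D}}:=\mathscr{C}_{\Omega}^{\mathbb{D},0}$. *)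

theory Defs
  imports "HOL-Complex_Analysis.Complex_Analysis"
begin

text \<open>Hurwitz radius r_Y(v): the supremum (the paper's max) of h'(0) over holomorphic
  h : D \<rightarrow> Y with h(0) = v, h(z) \<noteq> v for z \<noteq> 0, and h'(0) > 0.\<close>
definition hurwitz_radius :: "complex set \<Rightarrow> complex \<Rightarrow> real" where
  "hurwitz_radius Y v = Sup {Re (deriv h 0) | h.
      h holomorphic_on ball 0 1 \<and> h ` ball 0 1 \<subseteq> Y \<and> h 0 = v \<and>
      (\<forall>z \<in> ball 0 1 - {0}. h z \<noteq> v) \<and>
      deriv h 0 \<in> \<real> \<and> Re (deriv h 0) > 0}"

definition hurwitz_density :: "complex set \<Rightarrow> complex \<Rightarrow> real" where
  "hurwitz_density Y v = 2 / hurwitz_radius Y v"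

definition hurwitz_family :: "complex set \<Rightarrow> complex set \<Rightarrow> complex \<Rightarrow> complex \<Rightarrow> (complex \<Rightarrow> complex) set" where
  "hurwitz_family \<Omega> Y w s = {h. h holomorphic_on \<Omega> \<and> h ` \<Omega> \<subseteq> Y \<and> h w = s \<and>
      (\<forall>z \<in> \<Omega> - {w}. h z \<noteq> s)}"

definition cara_hurwitz :: "complex set \<Rightarrow> complex set \<Rightarrow> complex \<Rightarrow> complex \<Rightarrow> real" where
  "cara_hurwitz \<Omega> Y s w =
     (if hurwitz_family \<Omega> Y w s = {} then 0
      else Sup {hurwitz_density Y (h w) * norm (deriv h w) | h. h \<in> hurwitz_family \<Omega> Y w s})"

definition cara_hurwitz_disc :: "complex set \<Rightarrow> complex \<Rightarrow> real" where
  "cara_hurwitz_disc \<Omega> w = cara_hurwitz \<Omega> (ball 0 1) 0 w"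

end

theory Submission
  imports Defs
begin

(* If h : \<Omega> \<rightarrow> D with h(w) = 0 and g : D \<rightarrow> \<Omega> with g(0) = w, then h \<circ> g is a self-map
   of D fixing 0, so |h'(w)| g'(0) \<le> 1 by the Schwarz lemma; this gives C(w) \<le> \<eta>(w).
   If equality held, normal families would provide maps h and g attaining both suprema:
   Montel's theorem for h, and for g Schottky's theorem, which applies because \<Omega> omits
   two points (it carries a bounded nonconstant function h), with Hurwitz's theorem keeping
   the limit inside \<Omega>. Then |(h \<circ> g)'(0)| = 1, so h \<circ> g is a rotation, g is a
   biholomorphism of D onto \<Omega>, and \<Omega> would be simply connected. *)

lemma seq_tendsto_Sup:
  fixes S :: "real set"
  assumes "S \<noteq> {}" "bdd_above S"
  obtains x where "\<And>n. x n \<in> S" "x \<longlonglongrightarrow> Sup S"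
  using closure_contains_Sup[OF assms] unfolding closure_sequential by blast

lemma deriv_eq_0_if_constant_on:
  assumes "open S" "w \<in> S" "f constant_on S"
  shows "deriv f w = 0"
proof -
  obtain c where c: "\<And>z. z \<in> S \<Longrightarrow> f z = c"
    using assms(3) by (auto simp: constant_on_def)
  have "(f has_field_derivative 0) (at w)"
    by (rule has_field_derivative_transform_within_open[OF DERIV_const assms(1,2)]) (use c in auto)
  then show ?thesis
    by (rule DERIV_imp_deriv)
qed

lemma Schwarz_Lemma_comp:
  assumes "open \<Omega>" "h holomorphic_on \<Omega>" "h ` \<Omega> \<subseteq> ball 0 1" "h w = 0"
    and "g holomorphic_on ball 0 1" "g ` ball 0 1 \<subseteq> \<Omega>" "g 0 = w"
  shows "norm (deriv h w * deriv g 0) \<le> 1"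
    and "norm (deriv h w * deriv g 0) = 1 \<Longrightarrow>
           \<exists>\<alpha>. norm \<alpha> = 1 \<and> (\<forall>z \<in> ball 0 1. h (g z) = \<alpha> * z)"
proof -
  have hol: "(h \<circ> g) holomorphic_on ball 0 1"
    using assms by (intro holomorphic_on_compose_gen) auto
  have "w \<in> \<Omega>"
    using assms(6,7) by force
  then have "h field_differentiable at (g 0)" "g field_differentiable at 0"
    using assms(1,2,5,7) by (auto intro: holomorphic_on_imp_differentiable_at)
  then have chain: "deriv (\<lambda>z. h (g z)) 0 = deriv h w * deriv g 0"
    using deriv_chain[of g 0 h] assms(7) by (simp add: o_def mult.commute)
  have "(h \<circ> g) 0 = 0" "\<And>z. norm z < 1 \<Longrightarrow> norm ((h \<circ> g) z) < 1"
    using assms(3,4,6,7) by (auto simp: subset_iff)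
  note Schwarz = Schwarz_Lemma[OF hol this, of 0]
  show "norm (deriv h w * deriv g 0) \<le> 1"
    using Schwarz(2) chain by (simp add: o_def)
  show "\<exists>\<alpha>. norm \<alpha> = 1 \<and> (\<forall>z \<in> ball 0 1. h (g z) = \<alpha> * z)"
    if "norm (deriv h w * deriv g 0) = 1"
    using Schwarz(3) chain that by (auto simp: o_def)
qed

definition hurwitz_derivs :: "complex set \<Rightarrow> complex \<Rightarrow> real set" where
  "hurwitz_derivs Y v = {Re (deriv h 0) | h.
      h holomorphic_on ball 0 1 \<and> h ` ball 0 1 \<subseteq> Y \<and> h 0 = v \<and>
      (\<forall>z \<in> ball 0 1 - {0}. h z \<noteq> v) \<and>
      deriv h 0 \<in> \<real> \<and> Re (deriv h 0) > 0}"

lemma hurwitz_radius_eq_Sup: "hurwitz_radius Y v = Sup (hurwitz_derivs Y v)"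
  by (simp add: hurwitz_radius_def hurwitz_derivs_def)

lemma radius_mem_hurwitz_derivs:
  assumes "e > 0" "ball w e \<subseteq> \<Omega>"
  shows "e \<in> hurwitz_derivs \<Omega> w"
proof -
  define g where "g = (\<lambda>z. w + of_real e * z)"
  have "(g has_field_derivative of_real e) (at 0)"
    unfolding g_def by (auto intro!: derivative_eq_intros)
  then have "deriv g 0 = of_real e"
    by (rule DERIV_imp_deriv)
  moreover have "g ` ball 0 1 \<subseteq> ball w e"
    using assms(1) by (auto simp: g_def dist_norm norm_mult)
  ultimately show ?thesis
    unfolding hurwitz_derivs_def using assms
    by (intro CollectI exI[of _ g]) (auto simp: g_def intro!: holomorphic_intros)
qed

lemma hurwitz_derivs_le:
  assumes "open \<Omega>" "h holomorphic_on \<Omega>" "h ` \<Omega> \<subseteq> ball 0 1" "h w = 0"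
    and "y \<in> hurwitz_derivs \<Omega> w"
  shows "norm (deriv h w) * y \<le> 1"
proof -
  obtain g where g: "g holomorphic_on ball 0 1" "g ` ball 0 1 \<subseteq> \<Omega>" "g 0 = w"
    "deriv g 0 = of_real y" "y > 0"
    using assms(5) unfolding hurwitz_derivs_def by (auto simp: of_real_Re)
  show ?thesis
    using Schwarz_Lemma_comp(1)[OF assms(1-4) g(1-3)] g(4,5) by (simp add: norm_mult)
qed

lemma hurwitz_radius_disc: "hurwitz_radius (ball 0 1) 0 = 1"
proof -
  have "y \<le> 1" if "y \<in> hurwitz_derivs (ball 0 1) 0" for y
    using hurwitz_derivs_le[OF open_ball _ _ _ that, of "\<lambda>z. z"] by simp
  then show ?thesis
    unfolding hurwitz_radius_eq_Sup
    by (intro cSup_eq_maximum radius_mem_hurwitz_derivs) auto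
qed

lemma bdd_above_hurwitz_derivs:
  assumes "open \<Omega>" "h holomorphic_on \<Omega>" "h ` \<Omega> \<subseteq> ball 0 1" "h w = 0" "deriv h w \<noteq> 0"
  shows "bdd_above (hurwitz_derivs \<Omega> w)"
proof (rule bdd_aboveI)
  fix y assume "y \<in> hurwitz_derivs \<Omega> w"
  then have "norm (deriv h w) * y \<le> 1"
    by (rule hurwitz_derivs_le[OF assms(1-4)])
  then show "y \<le> 1 / norm (deriv h w)"
    using assms(5) by (simp add: field_simps)
qed

lemma hurwitz_radius_pos:
  assumes "open \<Omega>" "w \<in> \<Omega>" "bdd_above (hurwitz_derivs \<Omega> w)"
  shows "hurwitz_radius \<Omega> w > 0"
proof -
  obtain e where "e > 0" "ball w e \<subseteq> \<Omega>"
    using assms(1,2) open_contains_ball by blast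
  then show ?thesis
    unfolding hurwitz_radius_eq_Sup
    using cSup_upper[OF radius_mem_hurwitz_derivs assms(3)] by fastforce
qed

lemma cara_hurwitz_disc_eq_Sup:
  assumes "hurwitz_family \<Omega> (ball 0 1) w 0 \<noteq> {}"
  shows "cara_hurwitz_disc \<Omega> w =
           Sup ((\<lambda>h. 2 * norm (deriv h w)) ` hurwitz_family \<Omega> (ball 0 1) w 0)"
proof -
  have "hurwitz_density (ball 0 1) (h w) = 2" if "h \<in> hurwitz_family \<Omega> (ball 0 1) w 0" for h
    using that by (simp add: hurwitz_family_def hurwitz_density_def hurwitz_radius_disc)
  then show ?thesis
    using assms unfolding cara_hurwitz_disc_def cara_hurwitz_def Setcompr_eq_image
    by (metis (no_types, lifting) image_cong)
qed

lemma Montel_deriv: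
  fixes f :: "nat \<Rightarrow> complex \<Rightarrow> complex"
  assumes "open S" and hol: "\<And>n. f n holomorphic_on S"
    and bounded: "\<And>K. compact K \<Longrightarrow> K \<subseteq> S \<Longrightarrow> \<exists>B. \<forall>n. \<forall>z \<in> K. norm (f n z) \<le> B"
  obtains g r where "g holomorphic_on S" "strict_mono (r :: nat \<Rightarrow> nat)"
    "\<And>z. z \<in> S \<Longrightarrow> (\<lambda>n. f (r n) z) \<longlonglongrightarrow> g z"
    "\<And>K. compact K \<Longrightarrow> K \<subseteq> S \<Longrightarrow> uniform_limit K (f \<circ> r) g sequentially"
    "\<And>z. z \<in> S \<Longrightarrow> (\<lambda>n. deriv (f (r n)) z) \<longlonglongrightarrow> deriv g z"
proof -
  have bounded_range: "\<exists>B. \<forall>h \<in> range f. \<forall>z \<in> K. norm (h z) \<le> B"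
    if "compact K" "K \<subseteq> S" for K
    using bounded[OF that] by blast
  obtain g r where g: "g holomorphic_on S" "strict_mono (r :: nat \<Rightarrow> nat)"
      "\<And>z. z \<in> S \<Longrightarrow> (\<lambda>n. f (r n) z) \<longlonglongrightarrow> g z"
      and ul: "\<And>K. compact K \<Longrightarrow> K \<subseteq> S \<Longrightarrow> uniform_limit K (f \<circ> r) g sequentially"
    by (rule Montel[OF assms(1) _ bounded_range subset_refl]) (use hol in auto)
  have deriv_lim: "(\<lambda>n. deriv (f (r n)) z) \<longlonglongrightarrow> deriv g z" if "z \<in> S" for z
  proof -
    obtain e where e: "e > 0" "cball z e \<subseteq> S"
      using assms(1) \<open>z \<in> S\<close> open_contains_cball by blast
    have "ball z e \<subseteq> S"
      using e(2) ball_subset_cball by blast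
    then have "\<forall>\<^sub>F n in sequentially. (f \<circ> r) n holomorphic_on ball z e"
      by (auto intro!: always_eventually holomorphic_on_subset[OF hol])
    moreover have "uniform_limit (ball z e) (f \<circ> r) g sequentially"
      using ul[OF compact_cball e(2)] by (rule uniform_limit_on_subset) auto
    ultimately have "(\<lambda>n. deriv ((f \<circ> r) n) z) \<longlonglongrightarrow> deriv g z"
      using e(1) by (intro deriv_complex_uniform_limit) (auto simp: o_def)
    then show ?thesis
      by (simp add: o_def)
  qed
  show ?thesis
    using g ul deriv_lim by (rule that)
qed

lemma extremal_map_to_disc:
  assumes "open \<Omega>" "connected \<Omega>" "w \<in> \<Omega>"
    and hs: "\<And>n. hs n holomorphic_on \<Omega> \<and> hs n ` \<Omega> \<subseteq> ball 0 1 \<and> hs n w = 0"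
    and lim: "(\<lambda>n. norm (deriv (hs n) w)) \<longlonglongrightarrow> L" and "L > 0"
  obtains h where "h holomorphic_on \<Omega>" "h ` \<Omega> \<subseteq> ball 0 1" "h w = 0" "norm (deriv h w) = L"
proof -
  have le1: "norm (hs n z) \<le> 1" if "z \<in> \<Omega>" for n z
    using hs[of n] that by fastforce
  then have bounded: "\<exists>B. \<forall>n. \<forall>z \<in> K. norm (hs n z) \<le> B" if "K \<subseteq> \<Omega>" for K
    using that by blast
  obtain h r where h: "h holomorphic_on \<Omega>" "strict_mono r"
      "\<And>z. z \<in> \<Omega> \<Longrightarrow> (\<lambda>n. hs (r n) z) \<longlonglongrightarrow> h z"
      "\<And>K. compact K \<Longrightarrow> K \<subseteq> \<Omega> \<Longrightarrow> uniform_limit K (hs \<circ> r) h sequentially"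
      "\<And>z. z \<in> \<Omega> \<Longrightarrow> (\<lambda>n. deriv (hs (r n)) z) \<longlonglongrightarrow> deriv h z"
    by (rule Montel_deriv[OF assms(1), of hs]) (use hs bounded in auto)
  have "(\<lambda>n. norm (deriv (hs (r n)) w)) \<longlonglongrightarrow> norm (deriv h w)"
    using h(5)[OF assms(3)] by (rule tendsto_norm)
  moreover have "(\<lambda>n. norm (deriv (hs (r n)) w)) \<longlonglongrightarrow> L"
    using LIMSEQ_subseq_LIMSEQ[OF lim h(2)] by (simp add: o_def)
  ultimately have dh: "norm (deriv h w) = L"
    by (rule LIMSEQ_unique)
  have "h w = 0"
    using h(3)[OF assms(3)] hs by (simp add: LIMSEQ_const_iff)
  have "\<not> h constant_on \<Omega>"
    using deriv_eq_0_if_constant_on[OF assms(1,3)] dh \<open>L > 0\<close> by auto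
  then have "open (h ` \<Omega>)"
    by (rule open_mapping_thm[OF h(1) assms(1,2) assms(1) order_refl])
  moreover have "norm (h z) \<le> 1" if "z \<in> \<Omega>" for z
    using h(3)[OF that] le1[OF that] by (intro LIMSEQ_le_const2[OF tendsto_norm]) auto
  ultimately have "h ` \<Omega> \<subseteq> interior (cball 0 1)"
    by (intro interior_maximal) auto
  then show ?thesis
    using that h(1) \<open>h w = 0\<close> dh by simp
qed

lemma two_points_not_in_if_bounded_nonconstant:
  assumes "\<Omega> \<noteq> UNIV" "f holomorphic_on \<Omega>" "bounded (f ` \<Omega>)" "\<not> f constant_on \<Omega>"
  obtains a b where "a \<notin> \<Omega>" "b \<notin> \<Omega>" "a \<noteq> b"
proof -
  obtain a where a: "a \<notin> \<Omega>"
    using assms(1) by blast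
  have "\<exists>b. b \<notin> \<Omega> \<and> b \<noteq> a"
  proof (rule ccontr)
    assume "\<nexists>b. b \<notin> \<Omega> \<and> b \<noteq> a"
    with a have \<Omega>: "\<Omega> = UNIV - {a}"
      by blast
    obtain B where B: "\<And>z. z \<in> \<Omega> \<Longrightarrow> norm (f z) \<le> B"
      using assms(3) by (auto simp: bounded_iff)
    then have "\<forall>\<^sub>F z in at a. norm (f z) \<le> B"
      by (auto simp: eventually_at_filter \<Omega> intro!: always_eventually)
    then obtain g where g: "g holomorphic_on UNIV" "\<And>z. z \<noteq> a \<Longrightarrow> g z = f z"
      using holomorphic_on_extend_bounded[of f UNIV a] assms(2) \<Omega> by auto
    have "g z \<in> insert (g a) (f ` \<Omega>)" for z
      using g(2)[of z] \<Omega> by (cases "z = a") auto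
    then have "range g \<subseteq> insert (g a) (f ` \<Omega>)"
      by blast
    then have "bounded (range g)"
      using assms(3) bounded_insert bounded_subset by blast
    then obtain c where "\<And>z. g z = c"
      using Liouville_theorem[OF g(1)] by (auto simp: constant_on_def)
    then have "f constant_on \<Omega>"
      unfolding constant_on_def using g(2) \<Omega> by (intro exI[of _ c]) auto
    with assms(4) show False ..
  qed
  with a show ?thesis
    using that by blast
qed

lemma Schottky_uniform_bound:
  assumes "a \<notin> \<Omega>" "b \<notin> \<Omega>" "a \<noteq> b" "compact K" "K \<subseteq> ball 0 1"
  obtains B where "\<And>g z. g holomorphic_on ball 0 1 \<Longrightarrow> g ` ball 0 1 \<subseteq> \<Omega> \<Longrightarrow> g 0 = w \<Longrightarrow>
    z \<in> K \<Longrightarrow> norm (g z) \<le> B"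
proof -
  obtain \<rho> where \<rho>: "0 \<le> \<rho>" "\<rho> < 1" "\<And>z. z \<in> K \<Longrightarrow> norm z \<le> \<rho>"
  proof (cases "K = {}")
    case False
    then obtain x where "x \<in> K" "\<And>z. z \<in> K \<Longrightarrow> norm z \<le> norm x"
      using continuous_attains_sup[OF assms(4) _ continuous_on_norm_id] by blast
    with assms(5) show thesis
      using that[of "norm x"] by auto
  qed (use that[of 0] in auto)
  \<comment> \<open>Schottky's theorem needs a closed disc: apply it to u \<mapsto> g (q u), at the point
     z / q of norm at most \<rho> / q \<le> q < 1.\<close>
  define q where "q = (1 + \<rho>) / 2"
  have q: "0 < q" "q < 1" "\<rho> \<le> q * q"
    using \<rho>(1,2) mult_nonneg_nonneg[of "1 - \<rho>" "1 - \<rho>"] by (auto simp: q_def algebra_simps)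
  define M where
    "M = exp (pi * exp (pi * (2 + 2 * norm ((w - a) / (b - a)) + 12 * q / (1 - q))))"
  have "norm (g z) \<le> norm a + norm (b - a) * M"
    if g: "g holomorphic_on ball 0 1" "g ` ball 0 1 \<subseteq> \<Omega>" "g 0 = w" and "z \<in> K" for g z
  proof -
    define F where "F = (\<lambda>u. (g (of_real q * u) - a) / (b - a))"
    have scaled: "of_real q * u \<in> ball 0 1" if "u \<in> cball (0 :: complex) 1" for u
    proof -
      have "norm (of_real q * u) \<le> q"
        using that q(1) by (simp add: norm_mult mult_left_le)
      then show ?thesis
        using q(2) by simp
    qed
    then have "(g \<circ> (\<lambda>u. of_real q * u)) holomorphic_on cball 0 1"
      by (intro holomorphic_on_compose_gen[OF _ g(1)] holomorphic_intros) auto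
    then have "F holomorphic_on cball 0 1"
      unfolding F_def o_def using assms(3) by (intro holomorphic_intros) auto
    moreover have "\<not> (F u = 0 \<or> F u = 1)" if "u \<in> cball 0 1" for u
    proof -
      have "g (of_real q * u) \<in> \<Omega>"
        using g(2) scaled[OF that] by blast
      then show ?thesis
        using assms(1-3) by (auto simp: F_def divide_eq_1_iff)
    qed
    moreover have "norm (z / of_real q) \<le> q"
      using \<rho>(3)[OF \<open>z \<in> K\<close>] q by (simp add: norm_divide divide_le_eq mult.commute)
    ultimately have "norm (F (z / of_real q)) \<le> M"
      unfolding M_def using q(1,2) g(3) by (intro Schottky) (auto simp: F_def)
    moreover have "g z = a + (b - a) * F (z / of_real q)"
      using q(1) assms(3) by (simp add: F_def)
    ultimately show ?thesis
      by (metis norm_triangle_le norm_mult add_left_mono mult_left_mono norm_ge_zero)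
  qed
  then show ?thesis
    using that by blast
qed

lemma extremal_map_from_disc:
  assumes "a \<notin> \<Omega>" "b \<notin> \<Omega>" "a \<noteq> b"
    and gs: "\<And>n. gs n holomorphic_on ball 0 1 \<and> gs n ` ball 0 1 \<subseteq> \<Omega> \<and> gs n 0 = w"
    and lim: "(\<lambda>n. deriv (gs n) 0) \<longlonglongrightarrow> d" and "d \<noteq> 0"
  obtains g where "g holomorphic_on ball 0 1" "g ` ball 0 1 \<subseteq> \<Omega>" "g 0 = w" "deriv g 0 = d"
proof -
  have bounded: "\<exists>B. \<forall>n. \<forall>z \<in> K. norm (gs n z) \<le> B" if K: "compact K" "K \<subseteq> ball 0 1" for K
  proof -
    obtain B where "\<And>g z. g holomorphic_on ball 0 1 \<Longrightarrow> g ` ball 0 1 \<subseteq> \<Omega> \<Longrightarrow> g 0 = w \<Longrightarrow>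
        z \<in> K \<Longrightarrow> norm (g z) \<le> B"
      using Schottky_uniform_bound[where w = w, OF assms(1-3) K] by blast
    then show ?thesis
      using gs by blast
  qed
  obtain g r where g: "g holomorphic_on ball 0 1" "strict_mono r"
      "\<And>z. z \<in> ball 0 1 \<Longrightarrow> (\<lambda>n. gs (r n) z) \<longlonglongrightarrow> g z"
      "\<And>K. compact K \<Longrightarrow> K \<subseteq> ball 0 1 \<Longrightarrow> uniform_limit K (gs \<circ> r) g sequentially"
      "\<And>z. z \<in> ball 0 1 \<Longrightarrow> (\<lambda>n. deriv (gs (r n)) z) \<longlonglongrightarrow> deriv g z"
    by (rule Montel_deriv[OF open_ball, of gs]) (use gs bounded in auto)
  have "(\<lambda>n. deriv (gs (r n)) 0) \<longlonglongrightarrow> d"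
    using LIMSEQ_subseq_LIMSEQ[OF lim g(2)] by (simp add: o_def)
  with g(5)[of 0] have dg: "deriv g 0 = d"
    using LIMSEQ_unique by auto
  have "g 0 = w"
    using g(3)[of 0] gs by (simp add: LIMSEQ_const_iff)
  have nonconst: "\<not> g constant_on ball 0 1"
    using deriv_eq_0_if_constant_on[of "ball 0 1" 0 g] dg \<open>d \<noteq> 0\<close> by auto
  \<comment> \<open>Hurwitz: a value omitted by every gs n is omitted by their nonconstant limit.\<close>
  have "g z \<in> \<Omega>" if "z \<in> ball 0 1" for z
  proof (rule ccontr)
    define c where "c = g z"
    assume "g z \<notin> \<Omega>"
    moreover have "gs (r n) u \<in> \<Omega>" if "u \<in> ball 0 1" for n u
      using gs[of "r n"] that by blast
    ultimately have nonzero: "gs (r n) u - c \<noteq> 0" if "u \<in> ball 0 1" for n u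
      using that unfolding c_def by (metis right_minus_eq)
    have nonconst': "\<not> (\<lambda>u. g u - c) constant_on ball 0 1"
      using nonconst by (auto simp: constant_on_def) (metis diff_add_cancel)
    have ul: "uniform_limit K (\<lambda>n u. gs (r n) u - c) (\<lambda>u. g u - c) sequentially"
      if "compact K" "K \<subseteq> ball 0 1" for K
      using g(4)[OF that] by (intro uniform_limit_intros) (simp_all add: o_def)
    have hol_n: "(\<lambda>u. gs (r n) u - c) holomorphic_on ball 0 1" for n
      using gs[of "r n"] by (intro holomorphic_intros) auto
    have hol: "(\<lambda>u. g u - c) holomorphic_on ball 0 1"
      using g(1) by (intro holomorphic_intros)
    have "g z - c \<noteq> 0"
      by (rule Hurwitz_no_zeros[OF open_ball connected_ball hol_n hol ul nonconst' nonzero \<open>z \<in> ball 0 1\<close>])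
    then show False
      by (simp add: c_def)
  qed
  then show ?thesis
    using that g(1) \<open>g 0 = w\<close> dg by blast
qed

lemma homeomorphic_disc_if_Schwarz_extremal:
  assumes "open \<Omega>" "connected \<Omega>"
    and h: "h holomorphic_on \<Omega>" "h ` \<Omega> \<subseteq> ball 0 1" "h w = 0"
    and g: "g holomorphic_on ball 0 1" "g ` ball 0 1 \<subseteq> \<Omega>" "g 0 = w"
    and extremal: "norm (deriv h w * deriv g 0) = 1"
  shows "ball (0 :: complex) 1 homeomorphic \<Omega>"
proof -
  obtain \<alpha> where \<alpha>: "norm \<alpha> = 1" "\<And>z. z \<in> ball 0 1 \<Longrightarrow> h (g z) = \<alpha> * z"
    using Schwarz_Lemma_comp(2)[OF assms(1) h g extremal] by blast
  then have "\<alpha> \<noteq> 0"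
    by auto
  define k where "k = (\<lambda>z. h z / \<alpha>)"
  have k_hol: "k holomorphic_on \<Omega>"
    unfolding k_def using h(1) \<open>\<alpha> \<noteq> 0\<close> by (intro holomorphic_intros)
  have k_maps: "k ` \<Omega> \<subseteq> ball 0 1"
    using h(2) \<alpha>(1) by (auto simp: k_def norm_divide)
  have k_g: "k (g z) = z" if "z \<in> ball 0 1" for z
    using \<alpha>(2)[OF that] \<open>\<alpha> \<noteq> 0\<close> by (simp add: k_def)
  have "\<not> g constant_on ball 0 1"
    using deriv_eq_0_if_constant_on[of "ball 0 1" 0 g] extremal by auto
  then have "open (g ` ball 0 1)"
    by (rule open_mapping_thm[OF g(1) open_ball connected_ball open_ball order_refl])
  \<comment> \<open>g \<circ> k = id holds on the open set g(D), hence on \<Omega> by the identity theorem.\<close>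
  moreover have "(g \<circ> k) holomorphic_on \<Omega>"
    using k_hol k_maps g(1) by (intro holomorphic_on_compose_gen) auto
  moreover have "(g \<circ> k) z = id z" if "z \<in> g ` ball 0 1" for z
    using that k_g by auto
  ultimately have g_k: "g (k z) = z" if "z \<in> \<Omega>" for z
    using analytic_continuation_open[of "g ` ball 0 1" \<Omega> "g \<circ> k" id z] assms(1,2) g(2) that
    by auto
  have "homeomorphism (ball 0 1) \<Omega> g k"
    using g(1,2) k_hol k_maps k_g g_k
    by (intro homeomorphismI) (auto intro: holomorphic_on_imp_continuous_on)
  then show ?thesis
    unfolding homeomorphic_def by blast
qed

lemma cara_hurwitz_disc_extremal:
  assumes "open \<Omega>" "connected \<Omega>" "w \<in> \<Omega>" "cara_hurwitz_disc \<Omega> w > 0"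
  obtains h where "h holomorphic_on \<Omega>" "h ` \<Omega> \<subseteq> ball 0 1" "h w = 0"
    "2 * norm (deriv h w) = cara_hurwitz_disc \<Omega> w"
proof -
  define F where "F = hurwitz_family \<Omega> (ball 0 1) w 0"
  define Q where "Q = (\<lambda>h. 2 * norm (deriv h w)) ` F"
  have F: "h holomorphic_on \<Omega> \<and> h ` \<Omega> \<subseteq> ball 0 1 \<and> h w = 0" if "h \<in> F" for h
    using that by (simp add: F_def hurwitz_family_def)
  have "F \<noteq> {}"
    using assms(4) by (auto simp: F_def cara_hurwitz_disc_def cara_hurwitz_def)
  then have C: "cara_hurwitz_disc \<Omega> w = Sup Q"
    unfolding F_def Q_def by (rule cara_hurwitz_disc_eq_Sup)
  obtain e where e: "e > 0" "ball w e \<subseteq> \<Omega>"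
    using assms(1,3) open_contains_ball by blast
  have "norm (deriv h w) * e \<le> 1" if "h \<in> F" for h
    using hurwitz_derivs_le[OF assms(1)] F[OF that] radius_mem_hurwitz_derivs[OF e] by blast
  then have "x \<le> 2 / e" if "x \<in> Q" for x
    using that e(1) by (auto simp: Q_def field_simps)
  then have "bdd_above Q"
    by (rule bdd_aboveI)
  moreover have "Q \<noteq> {}"
    using \<open>F \<noteq> {}\<close> by (simp add: Q_def)
  ultimately obtain x where x: "\<And>n. x n \<in> Q" "x \<longlonglongrightarrow> Sup Q"
    using seq_tendsto_Sup by blast
  then have ex: "\<forall>n. \<exists>h. h \<in> F \<and> x n = 2 * norm (deriv h w)"
    unfolding Q_def by blast
  obtain hs where "\<forall>n. hs n \<in> F \<and> x n = 2 * norm (deriv (hs n) w)"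
    using choice[OF ex] by blast
  then have hs: "\<And>n. hs n \<in> F" "\<And>n. x n = 2 * norm (deriv (hs n) w)"
    by auto
  have "(\<lambda>n. norm (deriv (hs n) w)) \<longlonglongrightarrow> Sup Q / 2"
    using tendsto_divide[OF x(2) tendsto_const, of 2] by (simp add: hs(2))
  moreover have "Sup Q / 2 > 0"
    using assms(4) C by simp
  ultimately obtain h where h: "h holomorphic_on \<Omega>" "h ` \<Omega> \<subseteq> ball 0 1" "h w = 0"
    "norm (deriv h w) = Sup Q / 2"
    by (rule extremal_map_to_disc[OF assms(1-3) F[OF hs(1)]])
  show ?thesis
    by (rule that[OF h(1-3)]) (simp add: h(4) C)
qed

lemma hurwitz_radius_extremal:
  assumes "open \<Omega>" "\<Omega> \<noteq> UNIV" "w \<in> \<Omega>"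
    and h: "h holomorphic_on \<Omega>" "h ` \<Omega> \<subseteq> ball 0 1" "h w = 0" "deriv h w \<noteq> 0"
  obtains g where "g holomorphic_on ball 0 1" "g ` ball 0 1 \<subseteq> \<Omega>" "g 0 = w"
    "deriv g 0 = of_real (hurwitz_radius \<Omega> w)"
proof -
  have "bounded (h ` \<Omega>)"
    using h(2) bounded_ball bounded_subset by blast
  moreover have "\<not> h constant_on \<Omega>"
    using h(4) deriv_eq_0_if_constant_on[OF assms(1,3), of h] by blast
  ultimately obtain a b where ab: "a \<notin> \<Omega>" "b \<notin> \<Omega>" "a \<noteq> b"
    by (rule two_points_not_in_if_bounded_nonconstant[OF assms(2) h(1)])
  have bdd: "bdd_above (hurwitz_derivs \<Omega> w)"
    by (rule bdd_above_hurwitz_derivs[OF assms(1) h])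
  obtain e where "e > 0" "ball w e \<subseteq> \<Omega>"
    using assms(1,3) open_contains_ball by blast
  then have "hurwitz_derivs \<Omega> w \<noteq> {}"
    using radius_mem_hurwitz_derivs by blast
  then obtain y where y: "\<And>n. y n \<in> hurwitz_derivs \<Omega> w" "y \<longlonglongrightarrow> Sup (hurwitz_derivs \<Omega> w)"
    using seq_tendsto_Sup[OF _ bdd] by blast
  have "\<exists>g. g holomorphic_on ball 0 1 \<and> g ` ball 0 1 \<subseteq> \<Omega> \<and> g 0 = w \<and>
    deriv g 0 = of_real (y n)" for n
  proof -
    obtain g where "y n = Re (deriv g 0)" "g holomorphic_on ball 0 1" "g ` ball 0 1 \<subseteq> \<Omega>" "g 0 = w"
      "deriv g 0 \<in> \<real>"
      using y(1)[of n] unfolding hurwitz_derivs_def by blast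
    then show ?thesis
      by (intro exI[of _ g]) (simp add: of_real_Re)
  qed
  then have ex: "\<forall>n. \<exists>g. g holomorphic_on ball 0 1 \<and> g ` ball 0 1 \<subseteq> \<Omega> \<and> g 0 = w \<and>
    deriv g 0 = of_real (y n)"
    by blast
  obtain gs where "\<forall>n. gs n holomorphic_on ball 0 1 \<and> gs n ` ball 0 1 \<subseteq> \<Omega> \<and> gs n 0 = w
      \<and> deriv (gs n) 0 = of_real (y n)"
    using choice[OF ex] by blast
  then have gs: "\<And>n. gs n holomorphic_on ball 0 1 \<and> gs n ` ball 0 1 \<subseteq> \<Omega> \<and> gs n 0 = w"
    and dgs: "\<And>n. deriv (gs n) 0 = of_real (y n)"
    by auto
  have lim: "(\<lambda>n. deriv (gs n) 0) \<longlonglongrightarrow> of_real (hurwitz_radius \<Omega> w)"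
    unfolding dgs hurwitz_radius_eq_Sup by (rule tendsto_of_real[OF y(2)])
  have "(of_real (hurwitz_radius \<Omega> w) :: complex) \<noteq> 0"
    using hurwitz_radius_pos[OF assms(1,3) bdd] by simp
  then show ?thesis
    using that by (rule extremal_map_from_disc[OF ab gs lim])
qed

theorem proposition3p6:
  fixes \<Omega> :: "complex set"
  assumes "open \<Omega>" and "connected \<Omega>" and "\<Omega> \<noteq> {}" and "\<Omega> \<noteq> UNIV"
    and "\<not> simply_connected \<Omega>"
    and "\<forall>z \<in> \<Omega>. cara_hurwitz_disc \<Omega> z > 0"
    and "w \<in> \<Omega>"
  shows "cara_hurwitz_disc \<Omega> w < hurwitz_density \<Omega> w"
proof (rule ccontr)
  assume not_less: "\<not> cara_hurwitz_disc \<Omega> w < hurwitz_density \<Omega> w"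
  have C_pos: "cara_hurwitz_disc \<Omega> w > 0"
    using assms(6,7) by blast
  then obtain h where h: "h holomorphic_on \<Omega>" "h ` \<Omega> \<subseteq> ball 0 1" "h w = 0"
      and C: "2 * norm (deriv h w) = cara_hurwitz_disc \<Omega> w"
    using cara_hurwitz_disc_extremal[OF assms(1,2,7)] by blast
  have "deriv h w \<noteq> 0"
    using C C_pos by auto
  then have r_pos: "hurwitz_radius \<Omega> w > 0"
    using hurwitz_radius_pos[OF assms(1,7) bdd_above_hurwitz_derivs[OF assms(1) h]] by blast
  obtain g where g: "g holomorphic_on ball 0 1" "g ` ball 0 1 \<subseteq> \<Omega>" "g 0 = w"
      and dg: "deriv g 0 = of_real (hurwitz_radius \<Omega> w)"
    using hurwitz_radius_extremal[OF assms(1,4,7) h \<open>deriv h w \<noteq> 0\<close>] by blast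
  have "2 / hurwitz_radius \<Omega> w \<le> 2 * norm (deriv h w)"
    using not_less C by (simp add: hurwitz_density_def)
  then have "1 \<le> norm (deriv h w * deriv g 0)"
    using r_pos by (simp add: dg norm_mult field_simps)
  moreover have "norm (deriv h w * deriv g 0) \<le> 1"
    by (rule Schwarz_Lemma_comp(1)[OF assms(1) h g])
  ultimately have "ball (0 :: complex) 1 homeomorphic \<Omega>"
    using homeomorphic_disc_if_Schwarz_extremal[OF assms(1,2) h g] by simp
  then have "simply_connected \<Omega>"
    using homeomorphic_simply_connected convex_imp_simply_connected convex_ball by blast
  with assms(5) show False ..
qed

end
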